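(* For all nonnegative integers $n$ and $r$ with $n\geqslant\lceil r/2\rceil+1$, $$m\!\left(K_n^2, r\right)=\left\lfloor\frac{(r+1)^2}{4}\right\rfloor.$$
   Context: All graphs are finite, simple and undirected. For a nonnegative integer $r$ and a graph $G$, the $r$-neighbor bootstrap percolation process on $G$ starts with a set $A_0\subseteq V(G)$ of initially active vertices, and for $i\geqslant 1$, $A_i=A_{i-1}\cup\{v\in V(G) : |N(v)\cap A_{i-1}|\geqslant r\}$, where $N(v)$ is the set of neighbors of $v$. The set $A_0$ is a percolating set if $\bigcup_{i\geqslant 0}A_i=V(G)$. $m(G,r)$ denotes the minimum size of a percolating set of $G$ in the $r$-neighbor bootstrap percolation process. $K_n^2=K_n\square K_n$ is the graph with vertex set $\{0,\ldots,n-1\}^2$ in which two vertices are adjacent iff they differ in exactly one coordinate. *)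

theory Defs
  imports Main
begin

text \<open>A finite simple graph is given by a vertex set V and a symmetric irreflexive
adjacency relation E. Neighbourhood of v is {u \<in> V. E v u}.\<close>

definition nbhd :: "'a set \<Rightarrow> ('a \<Rightarrow> 'a \<Rightarrow> bool) \<Rightarrow> 'a \<Rightarrow> 'a set" where
  "nbhd V E v = {u \<in> V. E v u}"

fun bp_step :: "'a set \<Rightarrow> ('a \<Rightarrow> 'a \<Rightarrow> bool) \<Rightarrow> nat \<Rightarrow> 'a set \<Rightarrow> nat \<Rightarrow> 'a set" where
  "bp_step V E r A 0 = A"
| "bp_step V E r A (Suc i) =
     bp_step V E r A i \<union> {v \<in> V. card (nbhd V E v \<inter> bp_step V E r A i) \<ge> r}"

definition percolating :: "'a set \<Rightarrow> ('a \<Rightarrow> 'a \<Rightarrow> bool) \<Rightarrow> nat \<Rightarrow> 'a set \<Rightarrow> bool" where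
  "percolating V E r A \<longleftrightarrow> A \<subseteq> V \<and> (\<Union>i. bp_step V E r A i) = V"

text \<open>m(G,r): minimum size of a percolating set (V itself always percolates for finite V).\<close>
definition m_perc :: "'a set \<Rightarrow> ('a \<Rightarrow> 'a \<Rightarrow> bool) \<Rightarrow> nat \<Rightarrow> nat" where
  "m_perc V E r = Min {card A | A. percolating V E r A}"

definition Kn2_V :: "nat \<Rightarrow> (nat \<times> nat) set" where
  "Kn2_V n = {0..<n} \<times> {0..<n}"

definition Kn2_E :: "(nat \<times> nat) \<Rightarrow> (nat \<times> nat) \<Rightarrow> bool" where
  "Kn2_E x y \<longleftrightarrow> (fst x = fst y \<and> snd x \<noteq> snd y) \<or> (fst x \<noteq> fst y \<and> snd x = snd y)"

end

theory Submission
  imports Defs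
begin

text \<open>
Lower bound: in a percolating set F of the rook graph on P \<times> Q, the first vertex to become
active has r + 1 active neighbours in its row and column together. Deleting a line from the
grid removes at most one neighbour of every remaining vertex, so what is left of F percolates
the smaller grid with threshold r. Deleting the column if it holds at least k vertices of F,
and the row otherwise (it then holds at least l), induction gives k l \<le> |F| whenever
k + l \<le> r + 1, k \<le> |P| and l \<le> |Q|; take k = \<lceil>r/2\<rceil> and l = \<lfloor>r/2\<rfloor> + 1.

Upper bound: the triangle i + j < \<lceil>r/2\<rceil> together with the opposite triangle of size
\<lfloor>r/2\<rfloor> percolates, the remaining vertices becoming active in increasing order of i - j.
\<close>

lemma bp_step_mono:
  assumes "i \<le> j"
  shows "bp_step V E r A i \<subseteq> bp_step V E r A j"
  by (rule lift_Suc_mono_le[OF _ assms]) auto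

lemma bp_step_subset: "A \<subseteq> V \<Longrightarrow> bp_step V E r A i \<subseteq> V"
  by (induction i) auto

lemma finite_subset_bp_step:
  assumes "finite X" "X \<subseteq> (\<Union>i. bp_step V E r A i)"
  obtains i where "X \<subseteq> bp_step V E r A i"
proof -
  have "bp_step V E r A i \<subseteq> bp_step V E r A j \<or> bp_step V E r A j \<subseteq> bp_step V E r A i" for i j
    by (meson bp_step_mono nat_le_linear)
  then have "subset.chain UNIV (range (bp_step V E r A))"
    unfolding subset.chain_def by auto
  then show thesis
    using finite_subset_Union_chain[OF assms] that by blast
qed

lemma UN_bp_step_activation_closed:
  assumes "finite V" "v \<in> V" "r \<le> card (nbhd V E v \<inter> (\<Union>i. bp_step V E r A i))"
  shows "v \<in> (\<Union>i. bp_step V E r A i)"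
proof -
  have fin: "finite (nbhd V E v)"
    using assms(1) unfolding nbhd_def by simp
  obtain i where "nbhd V E v \<inter> (\<Union>i. bp_step V E r A i) \<subseteq> bp_step V E r A i"
    using finite_subset_bp_step[of "nbhd V E v \<inter> _"] fin by blast
  then have sub: "nbhd V E v \<inter> (\<Union>i. bp_step V E r A i) \<subseteq> nbhd V E v \<inter> bp_step V E r A i"
    by blast
  have "r \<le> card (nbhd V E v \<inter> bp_step V E r A i)"
    using assms(3) card_mono[OF _ sub] fin by (meson finite_Int le_trans)
  then have "v \<in> bp_step V E r A (Suc i)"
    using assms(2) by simp
  then show ?thesis by blast
qed

lemma percolating_by_measure:
  fixes f :: "'a \<Rightarrow> nat"
  assumes "finite V" "A \<subseteq> V"
    and "\<And>v. v \<in> V - A \<Longrightarrow> r \<le> card {u \<in> nbhd V E v. u \<in> A \<or> f u < f v}"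
  shows "percolating V E r A"
proof -
  let ?C = "\<Union>i. bp_step V E r A i"
  have A_C: "A \<subseteq> ?C"
    by (metis UN_upper UNIV_I bp_step.simps(1))
  have "v \<in> ?C" if "v \<in> V" for v
    using that
  proof (induction "f v" arbitrary: v rule: less_induct)
    case less
    show ?case
    proof (cases "v \<in> A")
      case True
      then show ?thesis using A_C by blast
    next
      case False
      have "{u \<in> nbhd V E v. u \<in> A \<or> f u < f v} \<subseteq> nbhd V E v \<inter> ?C"
        using A_C less.hyps unfolding nbhd_def by blast
      moreover have "finite (nbhd V E v)"
        using assms(1) unfolding nbhd_def by simp
      ultimately have "r \<le> card (nbhd V E v \<inter> ?C)"
        using assms(3)[of v] less.prems False by (meson card_mono finite_Int le_trans DiffI)
      then show ?thesis
        using UN_bp_step_activation_closed[OF assms(1) less.prems] by blast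
    qed
  qed
  moreover have "?C \<subseteq> V"
    using bp_step_subset[OF assms(2)] by blast
  ultimately show ?thesis
    unfolding percolating_def using assms(2) by blast
qed

lemma percolating_obtains_activatable:
  assumes "percolating V E r F" "F \<noteq> V"
  obtains v where "v \<in> V - F" "r \<le> card (nbhd V E v \<inter> F)"
proof -
  have "\<exists>v \<in> V - F. r \<le> card (nbhd V E v \<inter> F)"
  proof (rule ccontr)
    assume inactive: "\<not> ?thesis"
    have "bp_step V E r F i = F" for i
      by (induction i) (use inactive in auto)
    then show False
      using assms unfolding percolating_def by simp
  qed
  then show thesis
    using that by blast
qed

lemma percolating_Diff_lower_threshold:
  assumes "finite V" "percolating V E (Suc r) F"
    and sparse: "\<And>v. v \<in> V - D \<Longrightarrow> card (nbhd V E v \<inter> D) \<le> 1"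
  shows "percolating (V - D) E r (F - D)"
proof -
  have F_V: "F \<subseteq> V"
    using assms(2) unfolding percolating_def by simp
  have step: "bp_step V E (Suc r) F t - D \<subseteq> bp_step (V - D) E r (F - D) t" for t
  proof (induction t)
    case 0
    then show ?case by simp
  next
    case (Suc t)
    show ?case
    proof
      fix v assume v: "v \<in> bp_step V E (Suc r) F (Suc t) - D"
      show "v \<in> bp_step (V - D) E r (F - D) (Suc t)"
      proof (cases "v \<in> bp_step V E (Suc r) F t")
        case True
        then show ?thesis using v Suc.IH by auto
      next
        case False
        let ?X = "nbhd V E v \<inter> bp_step V E (Suc r) F t"
        have v_V: "v \<in> V" and card_X: "Suc r \<le> card ?X"
          using v False by auto
        have fin_X: "finite ?X"
          using assms(1) unfolding nbhd_def by simp
        have "card (?X \<inter> D) \<le> card (nbhd V E v \<inter> D)"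
          using assms(1) unfolding nbhd_def by (intro card_mono) auto
        also have "\<dots> \<le> 1"
          using sparse v_V v by blast
        finally have "r \<le> card (?X - D)"
          using card_X card_Diff_subset_Int[of ?X D] fin_X by simp
        also have "\<dots> \<le> card (nbhd (V - D) E v \<inter> bp_step (V - D) E r (F - D) t)"
          using assms(1) Suc.IH unfolding nbhd_def by (intro card_mono) auto
        finally show ?thesis
          using v v_V by simp
      qed
    qed
  qed
  have "(\<Union>t. bp_step (V - D) E r (F - D) t) = V - D"
  proof
    show "(\<Union>t. bp_step (V - D) E r (F - D) t) \<subseteq> V - D"
      using bp_step_subset[of "F - D" "V - D"] F_V by blast
    show "V - D \<subseteq> (\<Union>t. bp_step (V - D) E r (F - D) t)"
      using assms(2) step unfolding percolating_def by blast
  qed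
  then show ?thesis
    unfolding percolating_def using F_V by blast
qed

lemma card_nbhd_Int_column_le:
  assumes "snd v \<noteq> j"
  shows "card (nbhd (P \<times> Q) Kn2_E v \<inter> P \<times> {j}) \<le> 1"
proof -
  have "nbhd (P \<times> Q) Kn2_E v \<inter> P \<times> {j} \<subseteq> {(fst v, j)}"
    using assms unfolding nbhd_def Kn2_E_def by auto
  then show ?thesis
    using card_mono[of "{(fst v, j)}"] by fastforce
qed

lemma card_nbhd_Int_row_le:
  assumes "fst v \<noteq> i"
  shows "card (nbhd (P \<times> Q) Kn2_E v \<inter> {i} \<times> Q) \<le> 1"
proof -
  have "nbhd (P \<times> Q) Kn2_E v \<inter> {i} \<times> Q \<subseteq> {(i, snd v)}"
    using assms unfolding nbhd_def Kn2_E_def by auto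
  then show ?thesis
    using card_mono[of "{(i, snd v)}"] by fastforce
qed

lemma percolating_delete_column:
  assumes "finite P" "finite Q" "percolating (P \<times> Q) Kn2_E (Suc r) F"
  shows "percolating (P \<times> (Q - {j})) Kn2_E r (F - P \<times> {j})"
proof -
  have "P \<times> Q - P \<times> {j} = P \<times> (Q - {j})"
    by auto
  then show ?thesis
    using percolating_Diff_lower_threshold[OF _ assms(3), of "P \<times> {j}"]
      card_nbhd_Int_column_le assms(1,2) by auto
qed

lemma percolating_delete_row:
  assumes "finite P" "finite Q" "percolating (P \<times> Q) Kn2_E (Suc r) F"
  shows "percolating ((P - {i}) \<times> Q) Kn2_E r (F - {i} \<times> Q)"
proof -
  have "P \<times> Q - {i} \<times> Q = (P - {i}) \<times> Q"
    by auto
  then show ?thesis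
    using percolating_Diff_lower_threshold[OF _ assms(3), of "{i} \<times> Q"]
      card_nbhd_Int_row_le assms(1,2) by auto
qed

lemma percolating_grid_card_ge:
  assumes "finite P" "finite Q" "percolating (P \<times> Q) Kn2_E r F"
    and "k \<le> card P" "l \<le> card Q" "k + l \<le> r + 1"
  shows "k * l \<le> card F"
  using assms
proof (induction r arbitrary: P Q F k l)
  case 0
  then show ?case
    by (cases k) auto
next
  case (Suc r)
  have F_grid: "F \<subseteq> P \<times> Q"
    using Suc.prems(3) unfolding percolating_def by simp
  have fin_F: "finite F"
    using Suc.prems(1,2) F_grid finite_subset by blast
  consider (degenerate) "k = 0 \<or> l = 0" | (full) "F = P \<times> Q"
    | (proper) "0 < k" "0 < l" "F \<noteq> P \<times> Q"
    by blast
  then show ?case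
  proof cases
    case degenerate
    then show ?thesis by auto
  next
    case full
    then show ?thesis
      using Suc.prems(4,5) by (simp add: card_cartesian_product mult_le_mono)
  next
    case proper
    obtain v where v: "v \<in> P \<times> Q - F" "Suc r \<le> card (nbhd (P \<times> Q) Kn2_E v \<inter> F)"
      using percolating_obtains_activatable[OF Suc.prems(3) proper(3)] .
    obtain i j where ij: "v = (i, j)"
      by fastforce
    have split_F: "card F = card (F - D) + card (F \<inter> D)" for D
      using card_Int_Diff[OF fin_F, of D] by simp
    have "nbhd (P \<times> Q) Kn2_E v \<inter> F \<subseteq> (F \<inter> {i} \<times> Q) \<union> (F \<inter> P \<times> {j})"
      using F_grid ij unfolding nbhd_def Kn2_E_def by auto
    then have "Suc r \<le> card ((F \<inter> {i} \<times> Q) \<union> (F \<inter> P \<times> {j}))"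
      using v(2) fin_F by (meson card_mono finite_Int finite_Un le_trans)
    then have line_sum: "Suc r \<le> card (F \<inter> {i} \<times> Q) + card (F \<inter> P \<times> {j})"
      using card_Un_le le_trans by blast
    show ?thesis
    proof (cases "k \<le> card (F \<inter> P \<times> {j})")
      case True
      have "k * (l - 1) \<le> card (F - P \<times> {j})"
        by (rule Suc.IH[OF Suc.prems(1) _ percolating_delete_column[OF Suc.prems(1-3)]])
          (use Suc.prems v(1) ij proper in auto)
      then show ?thesis
        using split_F[of "P \<times> {j}"] True proper(2) by (cases l) auto
    next
      case False
      have "(k - 1) * l \<le> card (F - {i} \<times> Q)"
        by (rule Suc.IH[OF _ Suc.prems(2) percolating_delete_row[OF Suc.prems(1-3)]])
          (use Suc.prems v(1) ij proper in auto)
      moreover have "l \<le> card (F \<inter> {i} \<times> Q)"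
        using line_sum False Suc.prems(6) by linarith
      ultimately show ?thesis
        using split_F[of "{i} \<times> Q"] proper(1) by (cases k) auto
    qed
  qed
qed

definition triangle :: "nat \<Rightarrow> (nat \<times> nat) set" where
  "triangle k = {p. fst p + snd p < k}"

lemma triangle_Suc: "triangle (Suc k) = triangle k \<union> (\<lambda>i. (i, k - i)) ` {..k}"
  unfolding triangle_def by (auto simp: image_iff)

lemma finite_triangle: "finite (triangle k)"
  by (rule finite_subset[of _ "{..<k} \<times> {..<k}"]) (auto simp: triangle_def)

lemma card_triangle: "2 * card (triangle k) = k * (k + 1)"
proof (induction k)
  case 0
  then show ?case by (simp add: triangle_def)
next
  case (Suc k)
  have "card ((\<lambda>i. (i, k - i)) ` {..k}) = k + 1"
    by (subst card_image) (auto simp: inj_on_def)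
  moreover have "triangle k \<inter> (\<lambda>i. (i, k - i)) ` {..k} = {}"
    unfolding triangle_def by auto
  ultimately have "card (triangle (Suc k)) = card (triangle k) + (k + 1)"
    unfolding triangle_Suc by (subst card_Un_disjoint) (auto simp: finite_triangle)
  then show ?case
    using Suc.IH by simp
qed

definition corner_set :: "nat \<Rightarrow> nat \<Rightarrow> nat \<Rightarrow> (nat \<times> nat) set" where
  "corner_set n k l = triangle k \<union> (\<lambda>(i, j). (n - 1 - i, n - 1 - j)) ` triangle l"

lemma mem_corner_set:
  assumes "i < n" "j < n"
  shows "(i, j) \<in> corner_set n k l \<longleftrightarrow> i + j < k \<or> 2 * n \<le> i + j + 1 + l"
proof -
  have "(i, j) \<in> (\<lambda>(i, j). (n - 1 - i, n - 1 - j)) ` triangle l \<longleftrightarrow> 2 * n \<le> i + j + 1 + l"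
  proof
    assume "2 * n \<le> i + j + 1 + l"
    then have "(n - 1 - i, n - 1 - j) \<in> triangle l"
      using assms unfolding triangle_def by simp
    moreover have "(i, j) = (n - 1 - (n - 1 - i), n - 1 - (n - 1 - j))"
      using assms by simp
    ultimately show "(i, j) \<in> (\<lambda>(i, j). (n - 1 - i, n - 1 - j)) ` triangle l"
      by force
  qed (use assms in \<open>auto simp: triangle_def\<close>)
  then show ?thesis
    unfolding corner_set_def triangle_def by auto
qed

lemma corner_set_subset:
  assumes "k \<le> n" "l \<le> n"
  shows "corner_set n k l \<subseteq> Kn2_V n"
  using assms unfolding corner_set_def triangle_def Kn2_V_def by auto

lemma card_corner_set:
  assumes "k \<le> n" "l \<le> n" "k + l < 2 * n"
  shows "2 * card (corner_set n k l) = k * (k + 1) + l * (l + 1)"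
proof -
  let ?\<rho> = "\<lambda>(i, j). (n - 1 - i, n - 1 - j)"
  have "inj_on ?\<rho> (triangle l)"
    using assms(2) unfolding inj_on_def triangle_def by auto
  then have "card (?\<rho> ` triangle l) = card (triangle l)"
    by (rule card_image)
  moreover have "triangle k \<inter> ?\<rho> ` triangle l = {}"
    using assms unfolding triangle_def by auto
  ultimately have "card (corner_set n k l) = card (triangle k) + card (triangle l)"
    unfolding corner_set_def by (simp add: card_Un_disjoint finite_triangle)
  then show ?thesis
    using card_triangle[of k] card_triangle[of l] by simp
qed

lemma percolating_corner_set:
  assumes "k \<le> n" "l \<le> n"
  shows "percolating (Kn2_V n) Kn2_E (k + l) (corner_set n k l)"
proof -
  define f :: "nat \<times> nat \<Rightarrow> nat" where "f = (\<lambda>(i, j). i + (n - j))"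
  have "k + l \<le> card {u \<in> nbhd (Kn2_V n) Kn2_E v. u \<in> corner_set n k l \<or> f u < f v}"
    if v: "v \<in> Kn2_V n - corner_set n k l" for v
  proof -
    obtain i j where ij: "v = (i, j)" "i < n" "j < n" "k \<le> i + j" "i + j + 1 + l < 2 * n"
      using v mem_corner_set unfolding Kn2_V_def by fastforce
    \<comment> \<open>Row and column neighbours that are active earlier or lie in one of the triangles\<close>
    define Y where "Y = {j<..<n} \<union> {..<min j (k - i)}"
    define X where "X = {..<i} \<union> {max (Suc i) (2 * n - (j + 1 + l))..<n}"
    have "card Y = (n - Suc j) + min j (k - i)"
      unfolding Y_def by (subst card_Un_disjoint) auto
    moreover have "card X = i + (n - max (Suc i) (2 * n - (j + 1 + l)))"
      unfolding X_def by (subst card_Un_disjoint) auto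
    ultimately have "k + l \<le> card Y + card X"
      using ij(2-5) by (simp add: min_def max_def split: if_splits)
    also have "card Y + card X = card ({i} \<times> Y \<union> X \<times> {j})"
      unfolding X_def Y_def by (subst card_Un_disjoint) (auto simp: card_cartesian_product)
    also have "\<dots> \<le> card {u \<in> nbhd (Kn2_V n) Kn2_E v. u \<in> corner_set n k l \<or> f u < f v}"
    proof (rule card_mono)
      show "finite {u \<in> nbhd (Kn2_V n) Kn2_E v. u \<in> corner_set n k l \<or> f u < f v}"
        unfolding nbhd_def Kn2_V_def by simp
      show "{i} \<times> Y \<union> X \<times> {j}
          \<subseteq> {u \<in> nbhd (Kn2_V n) Kn2_E v. u \<in> corner_set n k l \<or> f u < f v}"
        using ij unfolding X_def Y_def f_def nbhd_def Kn2_V_def Kn2_E_def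
        by (auto simp: mem_corner_set)
    qed
    finally show ?thesis .
  qed
  moreover have "finite (Kn2_V n)"
    unfolding Kn2_V_def by simp
  ultimately show ?thesis
    using percolating_by_measure corner_set_subset[OF assms] by blast
qed

lemma m_perc_eqI:
  assumes "finite V" "percolating V E r A"
    and "\<And>B. percolating V E r B \<Longrightarrow> card A \<le> card B"
  shows "m_perc V E r = card A"
  unfolding m_perc_def
proof (rule Min_eqI)
  have "{card B |B. percolating V E r B} \<subseteq> card ` Pow V"
    unfolding percolating_def by auto
  then show "finite {card B |B. percolating V E r B}"
    using assms(1) finite_subset by blast
qed (use assms in auto)

lemma quarter_square_eq: "(r + 1)^2 div 4 = (r + 1) div 2 * (r div 2 + 1)" for r :: nat
  by (cases "even r") (auto elim!: evenE oddE simp: power2_eq_square algebra_simps)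

lemma triangle_numbers_sum_eq:
  "(r + 1) div 2 * ((r + 1) div 2 + 1) + r div 2 * (r div 2 + 1)
    = 2 * ((r + 1) div 2 * (r div 2 + 1))"
  for r :: nat
  by (cases "even r") (auto elim!: evenE oddE simp: algebra_simps)

theorem theorem2p1:
  fixes n r :: nat
  assumes "n \<ge> (r + 1) div 2 + 1"
  shows "m_perc (Kn2_V n) Kn2_E r = (r + 1)^2 div 4"
proof -
  define k where "k = (r + 1) div 2"
  define l where "l = r div 2"
  have kl: "k + l = r" "l \<le> k" "k < n"
    using assms unfolding k_def l_def by auto
  have perc: "percolating (Kn2_V n) Kn2_E r (corner_set n k l)"
    using percolating_corner_set[of k n l] kl by simp
  have card: "card (corner_set n k l) = (r + 1)^2 div 4"
    using card_corner_set[of k n l] kl triangle_numbers_sum_eq[of r] quarter_square_eq[of r]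
    unfolding k_def l_def by simp
  have "(r + 1)^2 div 4 \<le> card B" if "percolating (Kn2_V n) Kn2_E r B" for B
    using percolating_grid_card_ge[of "{0..<n}" "{0..<n}" r B k "l + 1"] that kl
      quarter_square_eq[of r] unfolding Kn2_V_def k_def l_def by simp
  then show ?thesis
    using m_perc_eqI[OF _ perc] card unfolding Kn2_V_def by simp
qed

end
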